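(* Let $d\ge 2$ be an integer. Let $(\mathrm{CD}_d,H_d)$ be a $2$-weak combinatorial description of the elementary differentials in dimension $d$ which is compatible with $\mathrm{RT}$ via equivariant surjections $p_n:\mathrm{RT}(n)\to\mathrm{CD}_d(n)$. Then every $p_n$ is a bijection; that is, $\mathrm{RT}$ is the only $2$-weak combinatorial description of $\mathcal{W}_d$ compatible with $\mathrm{RT}$.
   Context: Rooted trees: a rooted tree on $[n]$ is a set $E$ of ordered pairs (an edge $(v,w)$ means $w$ is a child of $v$) such that exactly one vertex (the root) has no parent, every other vertex has exactly one parent, and all vertices are connected to the root by following parents; $\mathrm{RT}(n)$ is the set of these, with $\mathfrak{S}_n$ acting by relabelling. $\mathcal{C}_d=C^\infty(\mathbb{R}^d,\mathbb{R}^d)$. For $\tau$ with root $r$ whose children are $v_1,\dots,v_k$, recursively $F(\tau)((f^i)_{i})=\sum_{j_1,\dots,j_k=1}^d F(\tau_{v_1})(\cdots)_{j_1}\cdots F(\tau_{v_k})(\cdots)_{j_k}\,\partial_{j_1}\cdots\partial_{j_k}f^r$, with $\tau_{v_m}$ the subtree of $v_m$ and its descendants evaluated on the $f^i$ indexed by its vertices, $(\cdot)_j$ the $j$-th coordinate, $\partial_j=\partial/\partial x_j$ (single vertex: $F(\tau)=f^r$). Labellings: fix $\ell$ (here $\ell=2$). $\mathfrak{S}_n$ acts on $[\ell]^n$ by permuting coordinates; for $k=(k_1,\dots,k_\ell)\in\mathbb{N}^\ell$ with $\sum k_i=n$, $[\ell]^{k}$ is the set of words with exactly $k_i$ letters $i$.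 For a sequence $C=(C(n))_n$ of $\mathfrak{S}_n$-sets, $\mathrm{L}^{k}(C)=(C(n)\times[\ell]^{k})/\big((a,\sigma.x)\sim(\sigma.a,x)\big)$. For $\varphi:[\ell]\to[\ell]$, $k^\varphi_i=\sum_{j\in\varphi^{-1}(i)}k_j$ and $\varphi_*:\mathrm{L}^{k}(C)\to\mathrm{L}^{k^\varphi}(C)$, $(c,(x_1,\dots,x_n))\mapsto(c,(\varphi(x_1),\dots,\varphi(x_n)))$; on maps $\Phi:\mathcal{C}_d^\ell\to\mathcal{C}_d$, $(\varphi_*\Phi)(f^1,\dots,f^\ell)=\Phi(f^{\varphi(1)},\dots,f^{\varphi(\ell)})$. $F^{k}((\tau,x))(f^1,\dots,f^\ell)=F(\tau)(f^{x_1},\dots,f^{x_n})$, and $\mathcal{W}_d^{k}$ is the real span of $F^{k}(\mathrm{L}^{k}(\mathrm{RT}))$ (maps $\mathcal{C}_d^\ell\to\mathcal{C}_d$ homogeneous of degree $k_i$ in the $i$-th input). An $\ell$-weak combinatorial description is a sequence $\mathrm{CD}_d=(\mathrm{CD}_d(n))_n$ of $\mathfrak{S}_n$-sets together with maps $H_d^{k}:\mathrm{L}^{k}(\mathrm{CD}_d)\to\mathcal{W}_d^{k}$ for all $k\in\mathbb{N}^\ell$, whose images span $\mathcal{W}_d^{k}$, and with $H_d^{k^\varphi}\circ\varphi_*=\varphi_*\circ H_d^{k}$ for every $\varphi:[\ell]\to[\ell]$. It is compatible with $\mathrm{RT}$ if there are $\mathfrak{S}_n$-equivariant surjections $p_n:\mathrm{RT}(n)\to\mathrm{CD}_d(n)$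 with $F^{k}((\tau,x))=H^{k}_d((p_n(\tau),x))$ for all $\tau\in\mathrm{RT}(n)$, $x\in[\ell]^{k}$. *)

theory Defs
  imports "HOL-Analysis.Analysis" "HOL-Combinatorics.Permutations"
begin

text \<open>The dimension d is CARD('d) for a finite index type 'd; points of R^d are real^'d.\<close>

definition pd :: "'d::finite \<Rightarrow> (real^'d \<Rightarrow> real^'d) \<Rightarrow> (real^'d \<Rightarrow> real^'d)" where
  "pd j f = (\<lambda>x. frechet_derivative f (at x) (axis j 1))"

primrec iter_pd :: "'d::finite list \<Rightarrow> (real^'d \<Rightarrow> real^'d) \<Rightarrow> (real^'d \<Rightarrow> real^'d)" where
  "iter_pd [] f = f"
| "iter_pd (j # js) f = pd j (iter_pd js f)"

definition smooth :: "(real^'d::finite \<Rightarrow> real^'d) \<Rightarrow> bool" where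
  "smooth f \<longleftrightarrow> (\<forall>js x. iter_pd js f differentiable (at x))"

type_synonym 'd vf = "real^'d \<Rightarrow> real^'d"
type_synonym 'd wmap = "(nat \<Rightarrow> 'd vf) \<Rightarrow> 'd vf"

text \<open>A map C_d^l -> C_d is represented by a function on index-nat families of vector fields;
  Crestrict l canonicalises it to its restriction to smooth l-tuples (indices 0..<l).\<close>
definition Crestrict :: "nat \<Rightarrow> ('d::finite) wmap \<Rightarrow> 'd wmap" where
  "Crestrict l \<Phi> = (\<lambda>fs. if (\<forall>i<l. smooth (fs i))
       then \<Phi> (\<lambda>i. if i < l then fs i else (\<lambda>_. 0)) else (\<lambda>_. 0))"

definition pushC :: "nat \<Rightarrow> (nat \<Rightarrow> nat) \<Rightarrow> ('d::finite) wmap \<Rightarrow> 'd wmap" where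
  "pushC l \<phi> \<Phi> = Crestrict l (\<lambda>fs. Crestrict l \<Phi> (\<lambda>i. fs (\<phi> i)))"

definition lspan :: "('d::finite) wmap set \<Rightarrow> 'd wmap set" where
  "lspan S = {(\<lambda>fs y. \<Sum>i<m. c i *\<^sub>R g i fs y) | (m::nat) c g. \<forall>i<m. g i \<in> S}"

definition RT :: "nat \<Rightarrow> (nat \<times> nat) set set" where
  "RT n = {E. E \<subseteq> {..<n} \<times> {..<n} \<and>
     (\<exists>r<n. (\<forall>v. (v, r) \<notin> E) \<and>
        (\<forall>w<n. w \<noteq> r \<longrightarrow> (\<exists>!v. (v, w) \<in> E)) \<and>
        (\<forall>w<n. (r, w) \<in> E\<^sup>*))}"

definition tree_root :: "nat \<Rightarrow> (nat \<times> nat) set \<Rightarrow> nat" where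
  "tree_root n E = (THE r. r < n \<and> (\<forall>v. (v, r) \<notin> E))"

definition children :: "(nat \<times> nat) set \<Rightarrow> nat \<Rightarrow> nat set" where
  "children E v = {w. (v, w) \<in> E}"

definition relabel :: "(nat \<Rightarrow> nat) \<Rightarrow> (nat \<times> nat) set \<Rightarrow> (nat \<times> nat) set" where
  "relabel \<sigma> E = (\<lambda>(v, w). (\<sigma> v, \<sigma> w)) ` E"

text \<open>Elementary differential of the subtree at v (fuel m >= height suffices):
  F(tau_v)(g) = sum over j : children(v) -> [d] of
     prod_c F(tau_c)(g)_{j c} * (d_{j c1} ... d_{j ck} g v).\<close>
primrec evF :: "(nat \<times> nat) set \<Rightarrow> (nat \<Rightarrow> ('d::finite) vf) \<Rightarrow> nat \<Rightarrow> nat \<Rightarrow> 'd vf" where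
  "evF E g 0 v = g v"
| "evF E g (Suc m) v = (\<lambda>y. \<Sum>j\<in>PiE (children E v) (\<lambda>_. UNIV).
      (\<Prod>c\<in>children E v. (evF E g m c y) $ (j c)) *\<^sub>R
        iter_pd (map j (sorted_list_of_set (children E v))) (g v) y)"

definition F :: "nat \<Rightarrow> (nat \<times> nat) set \<Rightarrow> (nat \<Rightarrow> ('d::finite) vf) \<Rightarrow> 'd vf" where
  "F n E g = evF E g n (tree_root n E)"

definition words :: "nat \<Rightarrow> (nat \<Rightarrow> nat) \<Rightarrow> nat list set" where
  "words l k = {x. length x = (\<Sum>i<l. k i) \<and> set x \<subseteq> {..<l} \<and> (\<forall>i<l. count_list x i = k i)}"

definition supp_ok :: "nat \<Rightarrow> (nat \<Rightarrow> nat) \<Rightarrow> bool" where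
  "supp_ok l k \<longleftrightarrow> (\<forall>i\<ge>l. k i = 0)"

definition Fk :: "nat \<Rightarrow> (nat \<times> nat) set \<Rightarrow> nat list \<Rightarrow> ('d::finite) wmap" where
  "Fk n E x = (\<lambda>fs. F n E (\<lambda>v. fs (x ! v)))"

definition Wk :: "'d itself \<Rightarrow> nat \<Rightarrow> (nat \<Rightarrow> nat) \<Rightarrow> ('d::finite) wmap set" where
  "Wk dt l k = lspan {Crestrict l (Fk n E x) :: 'd wmap | n E x. E \<in> RT n \<and> x \<in> words l k \<and> length x = n}"

definition permw :: "(nat \<Rightarrow> nat) \<Rightarrow> nat list \<Rightarrow> nat list" where
  "permw \<sigma> y = map (\<lambda>i. y ! \<sigma> i) [0..<length y]"

text \<open>Generating relation (a, sigma.x) ~ (sigma.a, x), with the coordinate action chosen so that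
  F^k is well defined (i.e. L^k(C) is the set of orbits of the diagonal S_n action).\<close>
definition lrel :: "(nat \<Rightarrow> 'c set) \<Rightarrow> (nat \<Rightarrow> (nat \<Rightarrow> nat) \<Rightarrow> 'c \<Rightarrow> 'c)
    \<Rightarrow> (('c \<times> nat list) \<times> ('c \<times> nat list)) set" where
  "lrel C act = {((a, permw \<sigma> y), (act (length y) \<sigma> a, y)) | a y \<sigma>.
       a \<in> C (length y) \<and> \<sigma> permutes {..<length y}}"

definition lclass :: "(nat \<Rightarrow> 'c set) \<Rightarrow> (nat \<Rightarrow> (nat \<Rightarrow> nat) \<Rightarrow> 'c \<Rightarrow> 'c)
    \<Rightarrow> 'c \<times> nat list \<Rightarrow> ('c \<times> nat list) set" where
  "lclass C act ax = ((lrel C act \<union> (lrel C act)\<inverse>)\<^sup>*) `` {ax}"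

definition Lset :: "(nat \<Rightarrow> 'c set) \<Rightarrow> (nat \<Rightarrow> (nat \<Rightarrow> nat) \<Rightarrow> 'c \<Rightarrow> 'c) \<Rightarrow> nat
    \<Rightarrow> (nat \<Rightarrow> nat) \<Rightarrow> ('c \<times> nat list) set set" where
  "Lset C act l k = {lclass C act (a, x) | a x. x \<in> words l k \<and> a \<in> C (length x)}"

definition kphi :: "nat \<Rightarrow> (nat \<Rightarrow> nat) \<Rightarrow> (nat \<Rightarrow> nat) \<Rightarrow> (nat \<Rightarrow> nat)" where
  "kphi l \<phi> k = (\<lambda>i. \<Sum>j\<in>{j. j < l \<and> \<phi> j = i}. k j)"

definition Sn_sets :: "(nat \<Rightarrow> 'c set) \<Rightarrow> (nat \<Rightarrow> (nat \<Rightarrow> nat) \<Rightarrow> 'c \<Rightarrow> 'c) \<Rightarrow> bool" where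
  "Sn_sets C act \<longleftrightarrow> (\<forall>n. (\<forall>a\<in>C n. act n id a = a) \<and>
     (\<forall>\<sigma> a. \<sigma> permutes {..<n} \<longrightarrow> a \<in> C n \<longrightarrow> act n \<sigma> a \<in> C n) \<and>
     (\<forall>\<sigma> \<tau> a. \<sigma> permutes {..<n} \<longrightarrow> \<tau> permutes {..<n} \<longrightarrow> a \<in> C n \<longrightarrow>
          act n (\<sigma> \<circ> \<tau>) a = act n \<sigma> (act n \<tau> a)))"

definition weak_comb_descr :: "'d itself \<Rightarrow> nat \<Rightarrow> (nat \<Rightarrow> 'c set)
    \<Rightarrow> (nat \<Rightarrow> (nat \<Rightarrow> nat) \<Rightarrow> 'c \<Rightarrow> 'c)
    \<Rightarrow> ((nat \<Rightarrow> nat) \<Rightarrow> ('c \<times> nat list) set \<Rightarrow> ('d::finite) wmap) \<Rightarrow> bool" where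
  "weak_comb_descr dt l C act H \<longleftrightarrow> Sn_sets C act \<and>
     (\<forall>k. supp_ok l k \<longrightarrow>
        (\<forall>\<xi>\<in>Lset C act l k. Crestrict l (H k \<xi>) \<in> Wk dt l k) \<and>
        lspan ((\<lambda>\<xi>. Crestrict l (H k \<xi>)) ` Lset C act l k) = Wk dt l k \<and>
        (\<forall>\<phi>. (\<forall>i<l. \<phi> i < l) \<longrightarrow>
           (\<forall>a x. x \<in> words l k \<longrightarrow> a \<in> C (length x) \<longrightarrow>
              Crestrict l (H (kphi l \<phi> k) (lclass C act (a, map \<phi> x)))
                = pushC l \<phi> (H k (lclass C act (a, x))))))"

definition compatible_RT :: "nat \<Rightarrow> (nat \<Rightarrow> 'c set)
    \<Rightarrow> (nat \<Rightarrow> (nat \<Rightarrow> nat) \<Rightarrow> 'c \<Rightarrow> 'c)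
    \<Rightarrow> ((nat \<Rightarrow> nat) \<Rightarrow> ('c \<times> nat list) set \<Rightarrow> ('d::finite) wmap)
    \<Rightarrow> (nat \<Rightarrow> (nat \<times> nat) set \<Rightarrow> 'c) \<Rightarrow> bool" where
  "compatible_RT l C act H p \<longleftrightarrow>
     (\<forall>n. p n ` RT n = C n \<and>
        (\<forall>\<sigma> E. \<sigma> permutes {..<n} \<longrightarrow> E \<in> RT n \<longrightarrow> p n (relabel \<sigma> E) = act n \<sigma> (p n E))) \<and>
     (\<forall>k. supp_ok l k \<longrightarrow> (\<forall>n E x. E \<in> RT n \<longrightarrow> x \<in> words l k \<longrightarrow> length x = n \<longrightarrow>
        Crestrict l (Fk n E x) = Crestrict l (H k (lclass C act (p n E, x)))))"

end

theory Submission
  imports Defs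
begin

(* Compatibility makes every p_n surjective, and if p_n E1 = p_n E2 then
   F^k(E1, x) = F^k(E2, x) for every two-colouring x of the vertices; so it suffices that
   two-coloured elementary differentials separate rooted trees (the remaining axioms of a weak
   combinatorial description are not needed).  Pick two coordinates a \<noteq> b, which is where d \<ge> 2
   enters, and give the vertices of a set S the field exp(y_a + y_b) e_b and all other vertices
   exp(y_a) e_a.  Partial derivatives of exponential fields are multiplicative, so at y = 0 the
   elementary differential is a product, over the edges, of the pairing of the child's direction
   with the parent's frequency; that pairing vanishes exactly on edges entering S from outside.
   Hence F(\<tau>)(0) \<noteq> 0 iff S is closed under taking parents.  These sets determine the ancestor
   relation, and a rooted tree is the transitive reduction of its ancestor relation. *)

section \<open>Rooted trees and their ancestor-closed vertex sets\<close>

lemma RT_E: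
  assumes "E \<in> RT n"
  obtains r where "r < n" "\<And>v. (v, r) \<notin> E" "\<And>w. w < n \<Longrightarrow> (r, w) \<in> E\<^sup>*"
    "E \<subseteq> {..<n} \<times> {..<n}"
  using assms unfolding RT_def mem_Collect_eq by (elim conjE exE) (rule that; auto)

lemma RT_single_valued_converse:
  assumes "E \<in> RT n"
  shows "single_valued (E\<inverse>)"
proof (rule single_valuedI)
  obtain r where root: "\<forall>v. (v, r) \<notin> E" and parent: "\<forall>w<n. w \<noteq> r \<longrightarrow> (\<exists>!v. (v, w) \<in> E)"
    and E: "E \<subseteq> {..<n} \<times> {..<n}"
    using assms unfolding RT_def mem_Collect_eq by (elim conjE exE) (rule that)
  fix w u v assume "(w, u) \<in> E\<inverse>" "(w, v) \<in> E\<inverse>"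
  moreover from this have "w < n" "w \<noteq> r" using E root by auto
  ultimately show "u = v" using parent by auto
qed

lemma RT_acyclic:
  assumes "E \<in> RT n"
  shows "acyclic E"
proof (rule acyclicI, rule allI)
  fix x
  obtain r where "r < n" and root: "\<And>v. (v, r) \<notin> E"
    and reach: "\<And>w. w < n \<Longrightarrow> (r, w) \<in> E\<^sup>*" and E: "E \<subseteq> {..<n} \<times> {..<n}"
    using assms by (rule RT_E) (rule that)
  have sv: "single_valued (E\<inverse>)" using assms by (rule RT_single_valued_converse)
  have "(w, w) \<notin> E\<^sup>+" if "(r, w) \<in> E\<^sup>*" for w
    using that
  proof (induction rule: rtrancl_induct)
    case base
    show ?case using root by (auto dest: tranclD2)
  next
    case (step y w)
    show ?case
    proof
      assume "(w, w) \<in> E\<^sup>+"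
      then obtain z where "(w, z) \<in> E\<^sup>*" "(z, w) \<in> E" by (auto dest: tranclD2)
      with step.hyps(2) sv have "(w, y) \<in> E\<^sup>*" by (auto dest: single_valuedD)
      with step.hyps(2) have "(y, y) \<in> E\<^sup>+" by (rule rtrancl_into_trancl2)
      with step.IH show False ..
    qed
  qed
  moreover have "x < n" if "(x, x) \<in> E\<^sup>+" using that E by (auto dest: tranclD)
  ultimately show "(x, x) \<notin> E\<^sup>+" using reach by blast
qed

lemma RT_tree_root:
  assumes "E \<in> RT n" "r < n" "\<And>v. (v, r) \<notin> E"
  shows "tree_root n E = r"
proof -
  obtain r0 where "r0 < n" "\<And>v. (v, r0) \<notin> E"
    and reach: "\<And>w. w < n \<Longrightarrow> (r0, w) \<in> E\<^sup>*" and "E \<subseteq> {..<n} \<times> {..<n}"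
    using assms(1) by (rule RT_E) (rule that)
  have unique: "w = r0" if "w < n" "\<forall>v. (v, w) \<notin> E" for w
    using reach[OF that(1)] that(2) by (cases rule: rtranclE) auto
  have "r = r0" using unique assms(2,3) by blast
  show ?thesis
    unfolding tree_root_def
    by (rule the_equality) (use assms(2,3) unique \<open>r = r0\<close> in blast)+
qed

lemma acyclic_relpow_less_card:
  assumes "acyclic E" "E \<subseteq> A \<times> A" "finite A" "x \<in> A" "(x, y) \<in> E ^^ m"
  shows "m < card A"
proof -
  obtain f where f: "f 0 = x" "\<And>i. i < m \<Longrightarrow> (f i, f (Suc i)) \<in> E"
    using assms(5) by (metis relpow_fun_conv)
  have path: "(f i, f j) \<in> E\<^sup>+" if "i < j" "j \<le> m" for i j
    using that
  proof (induction j)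
    case (Suc j)
    then have "(f j, f (Suc j)) \<in> E" using f(2) by simp
    then show ?case using Suc by (cases "i = j") auto
  qed simp
  have "inj_on f {..m}"
  proof (rule inj_onI)
    fix i j assume "i \<in> {..m}" "j \<in> {..m}" "f i = f j"
    then show "i = j"
      using path[of i j] path[of j i] assms(1) unfolding acyclic_def
      by (metis atMost_iff linorder_neqE_nat)
  qed
  moreover have "f ` {..m} \<subseteq> A"
  proof
    fix y assume "y \<in> f ` {..m}"
    then obtain i where i: "i \<le> m" "y = f i" by auto
    show "y \<in> A"
    proof (cases i)
      case (Suc j)
      then have "(f j, y) \<in> E" using f(2)[of j] i by simp
      then show ?thesis using assms(2) by auto
    qed (use f(1) i assms(4) in simp)
  qed
  ultimately have "card {..m} \<le> card A" using assms(3) by (rule card_inj_on_le)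
  then show ?thesis by simp
qed

definition ancestor_closed :: "('a \<times> 'a) set \<Rightarrow> 'a set \<Rightarrow> bool" where
  "ancestor_closed E S \<longleftrightarrow> (\<forall>s t. (s, t) \<in> E \<longrightarrow> t \<in> S \<longrightarrow> s \<in> S)"

lemma rtrancl_iff_ancestor_closed:
  "(s, t) \<in> E\<^sup>* \<longleftrightarrow> (\<forall>S. ancestor_closed E S \<longrightarrow> t \<in> S \<longrightarrow> s \<in> S)"
proof
  assume "(s, t) \<in> E\<^sup>*"
  then show "\<forall>S. ancestor_closed E S \<longrightarrow> t \<in> S \<longrightarrow> s \<in> S"
    by (induction rule: converse_rtrancl_induct) (auto simp: ancestor_closed_def)
next
  assume "\<forall>S. ancestor_closed E S \<longrightarrow> t \<in> S \<longrightarrow> s \<in> S"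
  moreover have "ancestor_closed E {s. (s, t) \<in> E\<^sup>*}"
    by (auto simp: ancestor_closed_def intro: converse_rtrancl_into_rtrancl)
  ultimately show "(s, t) \<in> E\<^sup>*" by blast
qed

lemma eq_trancl_minus_trancl_O_trancl:
  assumes "acyclic E" "single_valued (E\<inverse>)"
  shows "E = E\<^sup>+ - E\<^sup>+ O E\<^sup>+"
proof (intro equalityI subsetI)
  fix e assume "e \<in> E"
  then obtain v u where vu: "e = (v, u)" "(v, u) \<in> E" by (cases e) auto
  have "(v, u) \<notin> E\<^sup>+ O E\<^sup>+"
  proof
    assume "(v, u) \<in> E\<^sup>+ O E\<^sup>+"
    then obtain w z where "(v, w) \<in> E\<^sup>+" "(w, z) \<in> E\<^sup>*" "(z, u) \<in> E"
      by (auto dest: tranclD2)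
    moreover from \<open>(z, u) \<in> E\<close> vu(2) assms(2) have "z = v" by (auto dest: single_valuedD)
    ultimately have "(v, v) \<in> E\<^sup>+" by auto
    with assms(1) show False unfolding acyclic_def by blast
  qed
  then show "e \<in> E\<^sup>+ - E\<^sup>+ O E\<^sup>+" using vu by auto
next
  fix e assume e: "e \<in> E\<^sup>+ - E\<^sup>+ O E\<^sup>+"
  then obtain v u where vu: "e = (v, u)" "(v, u) \<in> E\<^sup>+" by (cases e) auto
  then obtain z where "(v, z) \<in> E\<^sup>*" "(z, u) \<in> E" by (auto dest: tranclD2)
  then show "e \<in> E"
    using e vu by (cases "v = z") (auto simp: rtrancl_eq_or_trancl)
qed

lemma RT_eqI_ancestor_closed:
  assumes "E1 \<in> RT n" "E2 \<in> RT n" "\<And>S. ancestor_closed E1 S \<longleftrightarrow> ancestor_closed E2 S"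
  shows "E1 = E2"
proof -
  have "E1\<^sup>* = E2\<^sup>*" using assms(3) by (auto simp: rtrancl_iff_ancestor_closed)
  moreover have "E\<^sup>+ = E\<^sup>* - Id" if "E \<in> RT n" for E
    using RT_acyclic[OF that] unfolding acyclic_def by (auto simp: rtrancl_eq_or_trancl)
  ultimately have trancl_eq12: "E1\<^sup>+ = E2\<^sup>+" using assms(1,2) by simp
  have reduction: "E = E\<^sup>+ - E\<^sup>+ O E\<^sup>+" if "E \<in> RT n" for E
    using RT_acyclic[OF that] RT_single_valued_converse[OF that]
    by (rule eq_trancl_minus_trancl_O_trancl)
  show ?thesis by (subst (1 2) reduction) (use assms(1,2) trancl_eq12 in auto)
qed

section \<open>Exponential vector fields\<close>

definition exp_vf :: "real^'d::finite \<Rightarrow> real^'d \<Rightarrow> 'd vf" where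
  "exp_vf \<mu> w = (\<lambda>y. exp (\<mu> \<bullet> y) *\<^sub>R w)"

lemma has_derivative_exp_vf:
  "(exp_vf \<mu> w has_derivative (\<lambda>h. (exp (\<mu> \<bullet> x) * (\<mu> \<bullet> h)) *\<^sub>R w)) (at x)"
  unfolding exp_vf_def by (auto intro!: derivative_eq_intros)

lemma pd_exp_vf: "pd j (exp_vf \<mu> w) = exp_vf \<mu> ((\<mu> $ j) *\<^sub>R w)"
  by (rule ext, simp only: pd_def frechet_derivative_at[OF has_derivative_exp_vf, symmetric])
    (simp add: exp_vf_def inner_axis)

lemma iter_pd_exp_vf:
  "iter_pd js (exp_vf \<mu> w) = exp_vf \<mu> (prod_list (map (($) \<mu>) js) *\<^sub>R w)"
  by (induction js) (simp_all add: pd_exp_vf mult_ac)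

lemma smooth_exp_vf: "smooth (exp_vf \<mu> w)"
  unfolding smooth_def iter_pd_exp_vf differentiable_def using has_derivative_exp_vf by blast

lemma evF_Suc_exp_vf:
  fixes g :: "nat \<Rightarrow> ('d::finite) vf"
  assumes fin: "finite (children E v)" and gv: "g v = exp_vf \<mu> w"
  shows "evF E g (Suc m) v y = (\<Prod>c\<in>children E v. evF E g m c y \<bullet> \<mu>) *\<^sub>R g v y"
proof -
  let ?C = "children E v"
  have "iter_pd (map j (sorted_list_of_set ?C)) (g v) y = (\<Prod>c\<in>?C. \<mu> $ j c) *\<^sub>R g v y" for j
    unfolding gv iter_pd_exp_vf using fin
    by (simp add: exp_vf_def prod.distinct_set_conv_list[symmetric] comp_def)
  then have "evF E g (Suc m) v y
      = (\<Sum>j\<in>PiE ?C (\<lambda>_. UNIV). \<Prod>c\<in>?C. evF E g m c y $ j c * \<mu> $ j c) *\<^sub>R g v y"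
    by (simp add: prod.distrib scaleR_left.sum)
  also have "(\<Sum>j\<in>PiE ?C (\<lambda>_. UNIV). \<Prod>c\<in>?C. evF E g m c y $ j c * \<mu> $ j c)
      = (\<Prod>c\<in>?C. \<Sum>i\<in>UNIV. evF E g m c y $ i * \<mu> $ i)"
    using fin by (simp add: prod_sum_PiE)
  finally show ?thesis by (simp add: inner_vec_def)
qed

section \<open>Elementary differentials of two-coloured trees\<close>

definition colour_freq :: "'d::finite \<Rightarrow> 'd \<Rightarrow> bool \<Rightarrow> real^'d" where
  "colour_freq a b c = (if c then axis a 1 + axis b 1 else axis a 1)"

definition colour_dir :: "'d::finite \<Rightarrow> 'd \<Rightarrow> bool \<Rightarrow> real^'d" where
  "colour_dir a b c = (if c then axis b 1 else axis a 1)"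

definition colour_field :: "'d::finite \<Rightarrow> 'd \<Rightarrow> bool \<Rightarrow> 'd vf" where
  "colour_field a b c = exp_vf (colour_freq a b c) (colour_dir a b c)"

lemma colour_dir_inner_freq:
  assumes "a \<noteq> b"
  shows "colour_dir a b c' \<bullet> colour_freq a b c = (if c' \<and> \<not> c then 0 else 1)"
  using assms by (simp add: colour_dir_def colour_freq_def inner_axis_axis inner_add_right)

context
  fixes a b :: "'d::finite" and E :: "(nat \<times> nat) set" and n :: nat and S :: "nat set"
    and g :: "nat \<Rightarrow> 'd vf"
  assumes ab: "a \<noteq> b" and E: "E \<subseteq> {..<n} \<times> {..<n}"
    and g: "\<And>v. v < n \<Longrightarrow> g v = colour_field a b (v \<in> S)"
begin

declare evF.simps(2) [simp del]

lemma finite_children: "finite (children E v)"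
  using E by (auto intro: finite_subset[of _ "{..<n}"] simp: children_def)

lemma evF_colour_Suc:
  assumes "v < n"
  shows "evF E g (Suc m) v 0
    = (\<Prod>c\<in>children E v. evF E g m c 0 \<bullet> colour_freq a b (v \<in> S)) *\<^sub>R colour_dir a b (v \<in> S)"
proof -
  have "g v = exp_vf (colour_freq a b (v \<in> S)) (colour_dir a b (v \<in> S))"
    using g[OF assms] by (simp add: colour_field_def)
  then show ?thesis by (simp only: evF_Suc_exp_vf[OF finite_children]) (simp add: exp_vf_def)
qed

lemma evF_colour_parallel:
  assumes "v < n"
  shows "\<exists>\<sigma>. evF E g m v 0 = \<sigma> *\<^sub>R colour_dir a b (v \<in> S)"
proof (cases m)
  case 0
  show ?thesis by (rule exI[of _ 1]) (simp add: 0 g[OF assms] colour_field_def exp_vf_def)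
qed (use evF_colour_Suc[OF assms] in blast)

lemma evF_colour_ancestor_closed:
  assumes "ancestor_closed E S"
  shows "v < n \<Longrightarrow> evF E g m v 0 = colour_dir a b (v \<in> S)"
proof (induction m arbitrary: v)
  case (Suc m)
  have "evF E g m c 0 \<bullet> colour_freq a b (v \<in> S) = 1" if "c \<in> children E v" for c
  proof -
    have "c < n" "c \<in> S \<longrightarrow> v \<in> S"
      using that E assms by (auto simp: children_def ancestor_closed_def)
    then show ?thesis using Suc.IH colour_dir_inner_freq[OF ab] by auto
  qed
  then show ?case using Suc.prems by (simp add: evF_colour_Suc)
qed (simp add: g colour_field_def exp_vf_def)

lemma evF_colour_bad_edge:
  assumes st: "(s, t) \<in> E" "t \<in> S" "s \<notin> S"
  shows "(r, s) \<in> E ^^ d \<Longrightarrow> r < n \<Longrightarrow> d < m \<Longrightarrow> evF E g m r 0 = 0"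
proof (induction d arbitrary: r m)
  case 0
  obtain m' where m: "m = Suc m'" using 0 by (cases m) auto
  have t: "t \<in> children E r" "t < n" using 0 st E by (auto simp: children_def)
  obtain \<sigma> where "evF E g m' t 0 = \<sigma> *\<^sub>R colour_dir a b True"
    using evF_colour_parallel[OF t(2)] st(2) by auto
  then have "evF E g m' t 0 \<bullet> colour_freq a b (r \<in> S) = 0"
    using 0 st(3) colour_dir_inner_freq[OF ab] by simp
  with t(1) have "(\<Prod>c\<in>children E r. evF E g m' c 0 \<bullet> colour_freq a b (r \<in> S)) = 0"
    by (intro prod_zero finite_children) blast
  then show ?case using 0 m by (simp add: evF_colour_Suc)
next
  case (Suc d)
  obtain m' where m: "m = Suc m'" using Suc by (cases m) auto
  obtain r' where r': "(r, r') \<in> E" "(r', s) \<in> E ^^ d" using Suc.prems(1) by (rule relpow_Suc_E2)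
  then have r'_child: "r' \<in> children E r" "r' < n" using E by (auto simp: children_def)
  then have "evF E g m' r' 0 = 0" using Suc.IH[OF r'(2)] Suc.prems m by simp
  with r'_child(1) have "(\<Prod>c\<in>children E r. evF E g m' c 0 \<bullet> colour_freq a b (r \<in> S)) = 0"
    by (intro prod_zero finite_children) force
  then show ?case using Suc.prems(2) m by (simp add: evF_colour_Suc)
qed

end

lemma F_colour_field_neq_0_iff:
  fixes g :: "nat \<Rightarrow> ('d::finite) vf"
  assumes ab: "a \<noteq> b" and R: "E \<in> RT n"
    and g: "\<And>v. v < n \<Longrightarrow> g v = colour_field a b (v \<in> S)"
  shows "F n E g 0 \<noteq> 0 \<longleftrightarrow> ancestor_closed E S"
proof -
  obtain r where r: "r < n" "\<And>v. (v, r) \<notin> E"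
    and reach: "\<And>w. w < n \<Longrightarrow> (r, w) \<in> E\<^sup>*" and E: "E \<subseteq> {..<n} \<times> {..<n}"
    using R by (rule RT_E) (rule that)
  have F: "F n E g = evF E g n r" unfolding F_def RT_tree_root[OF R r(1,2)] ..
  show ?thesis
  proof
    assume "ancestor_closed E S"
    then show "F n E g 0 \<noteq> 0"
      using evF_colour_ancestor_closed[OF ab E g _ r(1)] F by (simp add: colour_dir_def)
  next
    assume F0: "F n E g 0 \<noteq> 0"
    show "ancestor_closed E S"
    proof (rule ccontr)
      assume "\<not> ancestor_closed E S"
      then obtain s t where st: "(s, t) \<in> E" "t \<in> S" "s \<notin> S"
        unfolding ancestor_closed_def by blast
      then obtain d where d: "(r, s) \<in> E ^^ d"
        using reach E by (auto simp: rtrancl_power)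
      \<comment> \<open>F evaluates evF with fuel n, which must exceed the depth of the bad edge\<close>
      have "d < n"
        using acyclic_relpow_less_card[OF RT_acyclic[OF R] E _ _ d] r(1) by simp
      then show False
        using evF_colour_bad_edge[OF ab E g st d r(1)] F0 F by simp
    qed
  qed
qed

lemma RT_eqI_Fk:
  assumes "CARD('d::finite) \<ge> 2" and R1: "E1 \<in> RT n" and R2: "E2 \<in> RT n"
    and Fk_eq: "\<And>x. length x = n \<Longrightarrow> set x \<subseteq> {..<2} \<Longrightarrow>
      Crestrict 2 (Fk n E1 x :: 'd wmap) = Crestrict 2 (Fk n E2 x)"
  shows "E1 = E2"
proof (rule RT_eqI_ancestor_closed[OF R1 R2])
  fix S
  obtain a b :: 'd where ab: "a \<noteq> b"
    using assms(1) card_le_Suc0_iff_eq[of "UNIV :: 'd set"] by auto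
  define x :: "nat list" where "x = map (\<lambda>v. of_bool (v \<in> S)) [0..<n]"
  define fs where "fs = (\<lambda>i::nat. colour_field a b (i \<noteq> 0))"
  define g where "g = (\<lambda>v. if x ! v < 2 then fs (x ! v) else (\<lambda>_. 0))"
  have "\<forall>i<2. smooth (fs i)" by (simp add: fs_def colour_field_def smooth_exp_vf)
  then have Crestrict_Fk: "Crestrict 2 (Fk n E x) fs = F n E g" for E :: "(nat \<times> nat) set"
    by (simp add: Crestrict_def Fk_def g_def)
  have "F n E1 g = Crestrict 2 (Fk n E1 x) fs" by (rule Crestrict_Fk[symmetric])
  also have "Crestrict 2 (Fk n E1 x :: 'd wmap) = Crestrict 2 (Fk n E2 x)"
    by (rule Fk_eq) (auto simp: x_def)
  also have "Crestrict 2 (Fk n E2 x) fs = F n E2 g" by (rule Crestrict_Fk)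
  finally have F_eq: "F n E1 g = F n E2 g" .
  have g_colour: "g v = colour_field a b (v \<in> S)" if "v < n" for v
    using that by (simp add: g_def x_def fs_def)
  show "ancestor_closed E1 S \<longleftrightarrow> ancestor_closed E2 S"
    using F_colour_field_neq_0_iff[OF ab R1 g_colour] F_colour_field_neq_0_iff[OF ab R2 g_colour]
      F_eq by simp
qed

lemma words_count_list:
  assumes "set x \<subseteq> {..<l}"
  shows "x \<in> words l (\<lambda>i. if i < l then count_list x i else 0)"
  using sum_count_set[OF assms] assms by (simp add: words_def)

lemma compatible_RT_Crestrict_Fk_eq:
  fixes H :: "(nat \<Rightarrow> nat) \<Rightarrow> ('c \<times> nat list) set \<Rightarrow> ('d::finite) wmap"
  assumes compat: "compatible_RT l CD act H p"
    and R: "E1 \<in> RT n" "E2 \<in> RT n" and p_eq: "p n E1 = p n E2"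
    and x: "length x = n" "set x \<subseteq> {..<l}"
  shows "Crestrict l (Fk n E1 x :: 'd wmap) = Crestrict l (Fk n E2 x)"
proof -
  define k where "k = (\<lambda>i. if i < l then count_list x i else 0)"
  have k: "x \<in> words l k" "supp_ok l k"
    using words_count_list[OF x(2)] by (simp_all add: k_def supp_ok_def)
  have "Crestrict l (Fk n E x :: 'd wmap) = Crestrict l (H k (lclass CD act (p n E, x)))"
    if "E \<in> RT n" for E
    using compat that k x(1) unfolding compatible_RT_def by blast
  then show ?thesis using R p_eq by simp
qed

theorem theorem6p1:
  fixes CD :: "nat \<Rightarrow> 'c set"
    and act :: "nat \<Rightarrow> (nat \<Rightarrow> nat) \<Rightarrow> 'c \<Rightarrow> 'c"
    and H :: "(nat \<Rightarrow> nat) \<Rightarrow> ('c \<times> nat list) set \<Rightarrow> ('d::finite) wmap"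
    and p :: "nat \<Rightarrow> (nat \<times> nat) set \<Rightarrow> 'c"
  assumes "CARD('d) \<ge> 2"
    and "weak_comb_descr TYPE('d) 2 CD act H"
    and "compatible_RT 2 CD act H p"
  shows "\<forall>n. bij_betw (p n) (RT n) (CD n)"
proof
  fix n
  have "inj_on (p n) (RT n)"
  proof (rule inj_onI)
    fix E1 E2 assume "E1 \<in> RT n" "E2 \<in> RT n" "p n E1 = p n E2"
    then show "E1 = E2"
      by (intro RT_eqI_Fk[OF assms(1)] compatible_RT_Crestrict_Fk_eq[OF assms(3)])
  qed
  moreover have "p n ` RT n = CD n" using assms(3) unfolding compatible_RT_def by blast
  ultimately show "bij_betw (p n) (RT n) (CD n)" by (simp add: bij_betw_def)
qed

end
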